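(* Let $X$ be a real Hilbert space and let $U,V$ be closed linear subspaces of $X$ such that $U\cap V=\{0\}$ and $U+V$ is closed. Then the couple $(U,V)$ is stable.
   Context: $P_C$ is the metric projection onto a closed convex nonempty set $C$; $B_X$ the closed unit ball; $\mathrm{dist}(x,S)=\inf_{s\in S}\|x-s\|$. Attouch–Wets convergence: for nonempty closed $C,D$ and $N\in\mathbb N$ let $e_N(C,D)=\sup_{c\in C\cap NB_X}\mathrm{dist}(c,D)$ ($0$ if $C\cap NB_X=\emptyset$), $h_N(C,D)=\max\{e_N(C,D),e_N(D,C)\}$; $C_j\to C$ if $h_N(C_j,C)\to0$ for every $N$. Given sequences $\{A_n\},\{B_n\}$ of closed convex nonempty sets and $a_0\in X$, the perturbed alternating projections sequences are $b_n=P_{B_n}(a_{n-1})$, $a_n=P_{A_n}(b_n)$ ($n\in\mathbb N$). The couple $(U,V)$ is stable if for every choice of sequences $\{A_n\},\{B_n\}$ of closed convex nonempty sets converging in the Attouch–Wets sense to $U$ and $V$ respectively, and every $a_0\in X$, the corresponding perturbed alternating projections sequences $\{a_n\}$ and $\{b_n\}$ converge in norm. *)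

theory Defs
  imports "HOL-Analysis.Analysis"
begin

definition metric_proj :: "'a::{real_inner,complete_space} set \<Rightarrow> 'a \<Rightarrow> 'a" where
  "metric_proj C x = (SOME y. y \<in> C \<and> (\<forall>z\<in>C. dist x y \<le> dist x z))"

definition aw_excess :: "nat \<Rightarrow> 'a::real_normed_vector set \<Rightarrow> 'a set \<Rightarrow> real" where
  "aw_excess N C D =
     (if C \<inter> cball 0 (real N) = {} then 0
      else (SUP c\<in>C \<inter> cball 0 (real N). infdist c D))"

definition aw_dist :: "nat \<Rightarrow> 'a::real_normed_vector set \<Rightarrow> 'a set \<Rightarrow> real" where
  "aw_dist N C D = max (aw_excess N C D) (aw_excess N D C)"

definition aw_converges :: "(nat \<Rightarrow> 'a::real_normed_vector set) \<Rightarrow> 'a set \<Rightarrow> bool" where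
  "aw_converges Cs C \<longleftrightarrow> (\<forall>N::nat. (\<lambda>j. aw_dist N (Cs j) C) \<longlonglongrightarrow> 0)"

text \<open>Perturbed alternating projections: pap_a A B a0 n = a_n, with a_0 = a0,
  b_n = P_{B n}(a_{n-1}), a_n = P_{A n}(b_n) for n \<ge> 1 (A 0, B 0 are unused).\<close>
primrec pap_a :: "(nat \<Rightarrow> 'a::{real_inner,complete_space} set) \<Rightarrow> (nat \<Rightarrow> 'a set) \<Rightarrow> 'a \<Rightarrow> nat \<Rightarrow> 'a" where
  "pap_a A B a0 0 = a0"
| "pap_a A B a0 (Suc n) = metric_proj (A (Suc n)) (metric_proj (B (Suc n)) (pap_a A B a0 n))"

text \<open>pap_b A B a0 n = b_{n+1} = P_{B (n+1)}(a_n).\<close>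
definition pap_b :: "(nat \<Rightarrow> 'a::{real_inner,complete_space} set) \<Rightarrow> (nat \<Rightarrow> 'a set) \<Rightarrow> 'a \<Rightarrow> nat \<Rightarrow> 'a" where
  "pap_b A B a0 n = metric_proj (B (Suc n)) (pap_a A B a0 n)"

definition stable_couple :: "'a::{real_inner,complete_space} set \<Rightarrow> 'a set \<Rightarrow> bool" where
  "stable_couple U V \<longleftrightarrow>
     (\<forall>A B a0.
        (\<forall>n. closed (A n) \<and> convex (A n) \<and> A n \<noteq> {}) \<longrightarrow>
        (\<forall>n. closed (B n) \<and> convex (B n) \<and> B n \<noteq> {}) \<longrightarrow>
        aw_converges A U \<longrightarrow> aw_converges B V \<longrightarrow>
        convergent (pap_a A B a0) \<and> convergent (pap_b A B a0))"

end

theory Submission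
  imports Defs
begin

(*
  Since U \<inter> V = {0} and U + V is closed, the decomposition of U + V is bounded,
  norm u \<le> K * norm (u + v); this is an open-mapping argument based on Baire's theorem.
  Testing the bound against v = -t y for y \<in> V shows norm (P_U y) \<le> c * norm y on V with
  c = sqrt (1 - 1/K^2) < 1, so P_U P_V is a strict contraction.  Attouch--Wets convergence
  makes the projections onto A_n and B_n converge to P_U and P_V uniformly on bounded sets,
  hence the nonexpansive maps P_{A_n} P_{B_n} eventually satisfy
  norm (P_{A_n} (P_{B_n} x)) \<le> c * norm x + \<delta> on every ball.  This first keeps the
  iterates a_n bounded and then drives them to 0; finally b_n \<rightarrow> 0 because
  P_{B_n} 0 \<rightarrow> P_V 0 = 0.
*)

section \<open>Elementary estimates and nonexpansive iterations\<close>

lemma Cauchy_if_dist_sq_le: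
  fixes z :: "nat \<Rightarrow> 'a::metric_space"
  assumes "\<And>m n. dist (z m) (z n) ^ 2 \<le> h m + h n" and "h \<longlonglongrightarrow> 0"
  shows "Cauchy z"
proof (rule metric_CauchyI)
  fix e :: real assume "e > 0"
  then have "e^2 / 2 > 0" by simp
  then obtain M where M: "\<And>n. n \<ge> M \<Longrightarrow> h n < e^2 / 2"
    using order_tendstoD(2)[OF assms(2)] unfolding eventually_sequentially by blast
  have "dist (z m) (z n) < e" if "m \<ge> M" "n \<ge> M" for m n
  proof -
    have "dist (z m) (z n) ^ 2 < e^2" using assms(1)[of m n] M[OF that(1)] M[OF that(2)] by linarith
    then show ?thesis using \<open>e > 0\<close> by (simp add: power_less_imp_less_base)
  qed
  then show "\<exists>M. \<forall>m\<ge>M. \<forall>n\<ge>M. dist (z m) (z n) < e" by blast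
qed

lemma dist_le_sum_if_dist_Suc_le:
  fixes f :: "nat \<Rightarrow> 'a::metric_space"
  assumes "\<And>i. dist (f i) (f (Suc i)) \<le> c i" and "m \<le> n"
  shows "dist (f m) (f n) \<le> (\<Sum>i\<in>{m..<n}. c i)"
  using assms(2)
proof (induction n rule: dec_induct)
  case (step n)
  have "dist (f m) (f (Suc n)) \<le> dist (f m) (f n) + dist (f n) (f (Suc n))"
    by (rule dist_triangle)
  also have "\<dots> \<le> (\<Sum>i\<in>{m..<n}. c i) + c n" using step.IH assms(1) by (rule add_mono)
  finally show ?case using step.hyps by (simp add: sum.atLeastLessThan_Suc)
qed simp

lemma Cauchy_if_summable_dist_Suc:
  fixes f :: "nat \<Rightarrow> 'a::metric_space"
  assumes "\<And>i. dist (f i) (f (Suc i)) \<le> c i" and "summable c"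
  shows "Cauchy f"
proof (rule metric_CauchyI)
  fix e :: real assume "e > 0"
  have "Cauchy (\<lambda>n. \<Sum>i<n. c i)"
    using assms(2) by (simp add: summable_iff_convergent convergent_Cauchy)
  from CauchyD[OF this \<open>e > 0\<close>]
  obtain M where M: "\<forall>m\<ge>M. \<forall>n\<ge>M. norm ((\<Sum>i<m. c i) - (\<Sum>i<n. c i)) < e" ..
  have dist_less: "dist (f m) (f n) < e" if "m \<ge> M" "n \<ge> M" "m \<le> n" for m n
  proof -
    have "(\<Sum>i<m. c i) + (\<Sum>i\<in>{m..<n}. c i) = (\<Sum>i<n. c i)"
      using \<open>m \<le> n\<close> by (simp add: lessThan_atLeast0 sum.atLeastLessThan_concat)
    then have "dist (f m) (f n) \<le> (\<Sum>i<n. c i) - (\<Sum>i<m. c i)"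
      using dist_le_sum_if_dist_Suc_le[of f c, OF assms(1) \<open>m \<le> n\<close>] by linarith
    moreover have "norm ((\<Sum>i<n. c i) - (\<Sum>i<m. c i)) < e" using M that(1,2) by blast
    ultimately show ?thesis by simp
  qed
  show "\<exists>M. \<forall>m\<ge>M. \<forall>n\<ge>M. dist (f m) (f n) < e"
  proof (intro exI allI impI)
    fix m n assume "m \<ge> M" "n \<ge> M"
    then show "dist (f m) (f n) < e"
      using dist_less[of m n] dist_less[of n m] by (cases "m \<le> n") (auto simp: dist_commute)
  qed
qed

lemma infdist_lessE:
  assumes "infdist x A < e" and "A \<noteq> {}"
  obtains a where "a \<in> A" and "dist x a < e"
  using assms by (auto simp: infdist_notempty cINF_less_iff intro: bdd_belowI[of _ 0])

lemma parallelogram_law: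
  fixes a b :: "'a::real_inner"
  shows "norm (a + b)^2 + norm (a - b)^2 = 2 * norm a^2 + 2 * norm b^2"
  by (simp add: power2_norm_eq_inner inner_add inner_diff inner_commute)

lemma norm_diff_sq_le_infdist:
  fixes x y z :: "'a::real_inner"
  assumes "convex C" and "y \<in> C" and "z \<in> C"
  shows "norm (y - z)^2 \<le> 2 * (dist x y^2 - infdist x C^2) + 2 * (dist x z^2 - infdist x C^2)"
proof -
  define m where "m = (1/2) *\<^sub>R y + (1/2) *\<^sub>R z"
  have "m \<in> C" unfolding m_def using assms by (intro convexD) auto
  then have "infdist x C \<le> dist x m" by (rule infdist_le)
  then have "infdist x C^2 \<le> dist x m^2" by (simp add: infdist_nonneg power_mono)
  moreover have "(x - y) + (x - z) = 2 *\<^sub>R (x - m)" and "(x - y) - (x - z) = z - y"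
    unfolding m_def by (simp_all add: algebra_simps scaleR_2)
  then have "4 * dist x m^2 + norm (y - z)^2 = 2 * dist x y^2 + 2 * dist x z^2"
    using parallelogram_law[of "x - y" "x - z"]
    by (simp add: dist_norm norm_minus_commute power_mult_distrib)
  ultimately show ?thesis by (simp add: algebra_simps)
qed

lemma small_eps_sqrt_bound:
  fixes d K :: real
  assumes "0 < d" and "0 \<le> K"
  obtains e where "0 < e" and "e \<le> 1" and "e + 2 * sqrt (e * K) \<le> d"
proof
  define e where "e = min 1 (min (d / 2) (d^2 / (16 * (K + 1))))"
  show "0 < e" and "e \<le> 1" using assms by (simp_all add: e_def)
  have "e * K \<le> d^2 / (16 * (K + 1)) * (K + 1)"
    using assms \<open>0 < e\<close> by (intro mult_mono) (auto simp: e_def)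
  also have "\<dots> = (d / 4)^2"
  proof -
    have "K + 1 \<noteq> 0" using assms(2) by simp
    then show ?thesis by (simp add: field_simps power2_eq_square)
  qed
  finally have "sqrt (e * K) \<le> d / 4"
    using assms(1) by (intro real_le_lsqrt) simp_all
  moreover have "e \<le> d / 2" unfolding e_def by (rule order_trans[OF min.cobounded2 min.cobounded1])
  ultimately show "e + 2 * sqrt (e * K) \<le> d" by linarith
qed

lemma tendsto_zero_if_eventually_contracting:
  fixes x :: "nat \<Rightarrow> real"
  assumes "\<And>n. 0 \<le> x n" and "0 \<le> c" and "c < 1" and bounded: "\<forall>\<^sub>F n in sequentially. x n \<le> B"
    and step: "\<And>d. 0 < d \<Longrightarrow> \<forall>\<^sub>F n in sequentially. x (Suc n) \<le> c * x n + d"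
  shows "x \<longlonglongrightarrow> 0"
proof (rule order_tendstoI)
  fix r :: real assume "0 < r"
  have "0 < (1 - c) * r / 2" using \<open>c < 1\<close> \<open>0 < r\<close> by simp
  from eventually_conj[OF bounded step[OF this]]
  obtain m where m: "\<And>n. n \<ge> m \<Longrightarrow> x n \<le> B \<and> x (Suc n) \<le> c * x n + (1 - c) * r / 2"
    unfolding eventually_sequentially by blast
  have "0 \<le> B" using m[of m] assms(1)[of m] by simp
  have decay: "x (m + k) \<le> r / 2 + c^k * B" for k
  proof (induction k)
    case 0
    then show ?case using m[of m] \<open>0 < r\<close> by simp
  next
    case (Suc k)
    have "x (m + Suc k) \<le> c * x (m + k) + (1 - c) * r / 2" using m[of "m + k"] by simp
    also have "\<dots> \<le> c * (r / 2 + c^k * B) + (1 - c) * r / 2"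
      using Suc.IH \<open>0 \<le> c\<close> by (simp add: mult_left_mono)
    also have "\<dots> = r / 2 + c^Suc k * B" by (simp add: field_simps)
    finally show ?case .
  qed
  have "(\<lambda>k. r / 2 + c^k * B) \<longlonglongrightarrow> r / 2 + 0 * B"
    using \<open>0 \<le> c\<close> \<open>c < 1\<close> by (intro tendsto_intros LIMSEQ_realpow_zero)
  moreover have "r / 2 + 0 * B < r" using \<open>0 < r\<close> by simp
  ultimately have "\<forall>\<^sub>F k in sequentially. r / 2 + c^k * B < r" by (rule order_tendstoD(2))
  then obtain k where "r / 2 + c^k * B < r" by (auto simp: eventually_sequentially)
  have "x n < r" if "n \<ge> m + k" for n
  proof -
    have "c^(n - m) * B \<le> c^k * B"
      using that \<open>0 \<le> c\<close> \<open>c < 1\<close> \<open>0 \<le> B\<close> by (intro mult_right_mono power_decreasing) auto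
    then show ?thesis using decay[of "n - m"] that \<open>r / 2 + c^k * B < r\<close> by simp
  qed
  then show "\<forall>\<^sub>F n in sequentially. x n < r" unfolding eventually_sequentially by blast
next
  fix r :: real assume "r < 0"
  then show "\<forall>\<^sub>F n in sequentially. r < x n"
    using assms(1) by (intro always_eventually allI) (meson less_le_trans)
qed

lemma norm_le_max_if_nonexpansive:
  fixes T :: "'a::real_normed_vector \<Rightarrow> 'a"
  assumes nonexp: "\<And>x y. dist (T x) (T y) \<le> dist x y"
    and ball: "\<And>y. norm y \<le> r \<Longrightarrow> norm (T y) \<le> r" and "0 \<le> r"
  shows "norm (T x) \<le> max r (norm x)"
proof (cases "norm x \<le> r")
  case True
  then show ?thesis using ball by simp
next
  case False
  define y where "y = (r / norm x) *\<^sub>R x"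
  have "0 < norm x" using False \<open>0 \<le> r\<close> by linarith
  then have "norm y = r" using \<open>0 \<le> r\<close> by (simp add: y_def)
  have "x - y = (1 - r / norm x) *\<^sub>R x" by (simp add: y_def algebra_simps)
  moreover have "0 \<le> 1 - r / norm x" using False \<open>0 < norm x\<close> by (simp add: field_simps)
  ultimately have "dist x y = (1 - r / norm x) * norm x" by (simp add: dist_norm)
  also have "\<dots> = norm x - r" using \<open>0 < norm x\<close> by (simp add: field_simps)
  finally have "dist x y = norm x - r" .
  then have "norm (T x) \<le> norm (T y) + (norm x - r)"
    using nonexp[of x y] norm_triangle_ineq2[of "T x" "T y"] by (simp add: dist_norm)
  then show ?thesis using ball[of y] \<open>norm y = r\<close> by simp
qed

lemma nonexpansive_iteration_tendsto_zero:
  fixes T :: "nat \<Rightarrow> 'a::real_normed_vector \<Rightarrow> 'a"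
  assumes a_Suc: "\<And>n. a (Suc n) = T n (a n)"
    and nonexp: "\<And>n x y. dist (T n x) (T n y) \<le> dist x y"
    and "0 \<le> c" and "c < 1"
    and approx: "\<And>R d. 0 < d \<Longrightarrow> \<forall>\<^sub>F n in sequentially. \<forall>x. norm x \<le> R \<longrightarrow> norm (T n x) \<le> c * norm x + d"
  shows "a \<longlonglongrightarrow> 0"
proof -
  \<comment> \<open>with \<open>d = 1 - c\<close> the maps eventually send the unit ball into itself, which bounds the orbit\<close>
  obtain n0 where n0: "\<And>n x. n \<ge> n0 \<Longrightarrow> norm x \<le> 1 \<Longrightarrow> norm (T n x) \<le> c * norm x + (1 - c)"
    using approx[where R = 1 and d = "1 - c"] \<open>c < 1\<close> unfolding eventually_sequentially by auto
  have "norm (T n x) \<le> 1" if "n \<ge> n0" "norm x \<le> 1" for n x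
    using n0[OF that] mult_left_mono[OF \<open>norm x \<le> 1\<close> \<open>0 \<le> c\<close>] by simp
  then have a_step: "norm (a (Suc n)) \<le> max 1 (norm (a n))" if "n \<ge> n0" for n
    unfolding a_Suc using that by (intro norm_le_max_if_nonexpansive nonexp) auto
  define B where "B = max 1 (norm (a n0))"
  have bounded: "norm (a n) \<le> B" if "n \<ge> n0" for n
    using that
  proof (induction n rule: dec_induct)
    case base
    then show ?case by (simp add: B_def)
  next
    case (step n)
    then show ?case using a_step[of n] by (simp add: B_def)
  qed
  have "(\<lambda>n. norm (a n)) \<longlonglongrightarrow> 0"
  proof (rule tendsto_zero_if_eventually_contracting[OF _ \<open>0 \<le> c\<close> \<open>c < 1\<close>])
    show "\<forall>\<^sub>F n in sequentially. norm (a n) \<le> B"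
      using bounded unfolding eventually_sequentially by blast
    show "\<forall>\<^sub>F n in sequentially. norm (a (Suc n)) \<le> c * norm (a n) + d" if "0 < d" for d
      using approx[OF that, of B] eventually_ge_at_top[of n0]
      by eventually_elim (simp add: a_Suc bounded)
  qed simp
  then show ?thesis by (simp add: tendsto_norm_zero_iff)
qed

section \<open>Metric projections in Hilbert spaces\<close>

lemma metric_proj_exists:
  fixes C :: "'a::{real_inner,complete_space} set"
  assumes "closed C" and "convex C" and "C \<noteq> {}"
  shows "\<exists>y\<in>C. \<forall>z\<in>C. dist x y \<le> dist x z"
proof -
  define d where "d = infdist x C"
  have "\<exists>z\<in>C. dist x z < sqrt (d^2 + inverse (real (Suc n)))" for n
  proof -
    have "d < sqrt (d^2 + inverse (real (Suc n)))"
      using real_less_rsqrt[of d "d^2 + inverse (real (Suc n))"] by simp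
    then show ?thesis using assms(3) unfolding d_def by (metis infdist_lessE)
  qed
  then obtain z where zC: "\<And>n. z n \<in> C"
    and z: "\<And>n. dist x (z n) < sqrt (d^2 + inverse (real (Suc n)))"
    by metis
  have z_sq: "dist x (z n)^2 - d^2 \<le> inverse (real (Suc n))" for n
    using real_sqrt_less_iff[of "dist x (z n)^2"] z[of n] by simp
  have "Cauchy z"
  proof (rule Cauchy_if_dist_sq_le)
    show "dist (z m) (z n)^2 \<le> 2 * inverse (real (Suc m)) + 2 * inverse (real (Suc n))" for m n
      using norm_diff_sq_le_infdist[OF assms(2) zC[of m] zC[of n], of x] z_sq[of m] z_sq[of n]
      unfolding d_def dist_norm by argo
    show "(\<lambda>n. 2 * inverse (real (Suc n))) \<longlonglongrightarrow> 0"
      using tendsto_mult_right_zero[OF LIMSEQ_inverse_real_of_nat] .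
  qed
  then obtain y where y: "z \<longlonglongrightarrow> y" using Cauchy_convergent_iff convergent_def by blast
  have "y \<in> C" using assms(1) zC y closed_sequentially by blast
  moreover have "dist x y \<le> d"
  proof (rule LIMSEQ_le)
    show "(\<lambda>n. dist x (z n)) \<longlonglongrightarrow> dist x y" using y by (intro tendsto_intros)
    show "(\<lambda>n. sqrt (d^2 + inverse (real (Suc n)))) \<longlonglongrightarrow> d"
      using tendsto_real_sqrt[OF LIMSEQ_inverse_real_of_nat_add[of "d^2"]]
      by (simp add: d_def infdist_nonneg)
  qed (use z less_imp_le in \<open>auto simp: d_def infdist_nonneg\<close>)
  ultimately show ?thesis unfolding d_def by (meson infdist_le order_trans)
qed

lemma metric_proj_nearest:
  fixes C :: "'a::{real_inner,complete_space} set"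
  assumes "closed C" and "convex C" and "C \<noteq> {}"
  shows "metric_proj C x \<in> C \<and> (\<forall>z\<in>C. dist x (metric_proj C x) \<le> dist x z)"
  unfolding metric_proj_def using metric_proj_exists[OF assms, of x] by (rule someI_ex[OF bexE]) blast+

lemma metric_proj_in_set:
  fixes C :: "'a::{real_inner,complete_space} set"
  assumes "closed C" and "convex C" and "C \<noteq> {}"
  shows "metric_proj C x \<in> C"
  using metric_proj_nearest[OF assms] by blast

lemma metric_proj_le:
  fixes C :: "'a::{real_inner,complete_space} set"
  assumes "closed C" and "convex C" and "z \<in> C"
  shows "dist x (metric_proj C x) \<le> dist x z"
  using metric_proj_nearest[OF assms(1,2)] assms(3) by blast

lemma metric_proj_dot:
  fixes C :: "'a::{real_inner,complete_space} set"
  assumes "closed C" and "convex C" and "z \<in> C"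
  shows "inner (x - metric_proj C x) (z - metric_proj C x) \<le> 0"
  using metric_proj_nearest[of C x] assms by (intro any_closest_point_dot) auto

lemma metric_proj_pythagoras_le:
  fixes C :: "'a::{real_inner,complete_space} set"
  assumes "closed C" and "convex C" and "z \<in> C"
  shows "dist x (metric_proj C x)^2 + dist (metric_proj C x) z^2 \<le> dist x z^2"
proof -
  let ?p = "metric_proj C x"
  have "dist x z^2 = dist x ?p^2 + dist ?p z^2 - 2 * inner (x - ?p) (z - ?p)"
    unfolding dist_norm power2_norm_eq_inner
    by (simp add: inner_diff_left inner_diff_right inner_commute)
  then show ?thesis using metric_proj_dot[OF assms, of x] by argo
qed

lemma metric_proj_lipschitz:
  fixes C :: "'a::{real_inner,complete_space} set"
  assumes "closed C" and "convex C" and "C \<noteq> {}"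
  shows "dist (metric_proj C x) (metric_proj C y) \<le> dist x y"
proof -
  have "inner (x - metric_proj C x) (metric_proj C y - metric_proj C x) \<le> 0"
    and "inner (y - metric_proj C y) (metric_proj C x - metric_proj C y) \<le> 0"
    using assms by (simp_all add: metric_proj_dot metric_proj_in_set)
  then show ?thesis unfolding dist_norm and norm_le
    using inner_ge_zero[of "(x - metric_proj C x) - (y - metric_proj C y)"]
    by (simp add: inner_add inner_diff inner_commute)
qed

lemma metric_proj_self:
  fixes C :: "'a::{real_inner,complete_space} set"
  assumes "closed C" and "convex C" and "x \<in> C"
  shows "metric_proj C x = x"
  using metric_proj_le[OF assms, of x] by (metis dist_le_zero_iff dist_self)

lemma norm_metric_proj_le:
  fixes C :: "'a::{real_inner,complete_space} set"
  assumes "closed C" and "convex C" and "0 \<in> C"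
  shows "norm (metric_proj C x) \<le> norm x"
  using metric_proj_lipschitz[OF assms(1,2), of x 0] metric_proj_self[OF assms] assms(3)
  by (auto simp: dist_norm)

lemma metric_proj_subspace_in:
  fixes U :: "'a::{real_inner,complete_space} set"
  assumes "subspace U" and "closed U"
  shows "metric_proj U x \<in> U"
  using assms subspace_0[OF assms(1)] by (intro metric_proj_in_set) (auto simp: subspace_imp_convex)

lemma metric_proj_subspace_orthogonal:
  fixes U :: "'a::{real_inner,complete_space} set"
  assumes "subspace U" and "closed U" and "u \<in> U"
  shows "inner (x - metric_proj U x) u = 0"
proof -
  let ?p = "metric_proj U x"
  have "?p \<in> U" using assms(1,2) by (rule metric_proj_subspace_in)
  then have "?p + u \<in> U" and "?p - u \<in> U" using assms by (auto intro: subspace_add subspace_diff)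
  then have "inner (x - ?p) ((?p + u) - ?p) \<le> 0" and "inner (x - ?p) ((?p - u) - ?p) \<le> 0"
    using metric_proj_dot[OF assms(2) subspace_imp_convex[OF assms(1)]] by blast+
  then show ?thesis by (simp add: inner_diff_right)
qed

lemma dist_metric_proj_le:
  fixes A D :: "'a::{real_inner,complete_space} set"
  assumes A: "closed A" "convex A" and D: "closed D" "convex D"
    and "q' \<in> A" "dist (metric_proj D x) q' \<le> e"
    and "p' \<in> D" "dist (metric_proj A x) p' \<le> e"
  shows "dist (metric_proj A x) (metric_proj D x) \<le> e + 2 * sqrt (e * (dist x (metric_proj D x) + e))"
proof -
  define p q \<delta> where "p = metric_proj A x" and "q = metric_proj D x" and "\<delta> = dist x q"
  have "dist x p \<le> \<delta> + e"
    using metric_proj_le[OF A \<open>q' \<in> A\<close>, of x] dist_triangle[of x q' q] assms(6)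
    unfolding p_def q_def \<delta>_def by (simp add: dist_commute)
  then have "dist x p' \<le> \<delta> + 2 * e"
    using dist_triangle[of x p' p] assms(8) unfolding p_def by linarith
  then have "dist x p'^2 \<le> (\<delta> + 2 * e)^2" by (simp add: power_mono)
  moreover have "\<delta>^2 + dist q p'^2 \<le> dist x p'^2"
    using metric_proj_pythagoras_le[OF D \<open>p' \<in> D\<close>, of x] unfolding q_def \<delta>_def .
  ultimately have "(dist q p' / 2)^2 \<le> e * (\<delta> + e)"
    by (simp add: power2_eq_square algebra_simps)
  then have "dist q p' / 2 \<le> sqrt (e * (\<delta> + e))" by (intro real_le_rsqrt)
  then show ?thesis
    using dist_triangle[of p q p'] assms(8) unfolding p_def q_def \<delta>_def by (simp add: dist_commute)
qed

section \<open>Sums of closed subspaces\<close>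

lemma subspace_set_plus:
  assumes "subspace U" and "subspace V"
  shows "subspace (U + V)"
proof -
  have "U + V = {u + v |u v. u \<in> U \<and> v \<in> V}" by (auto simp: set_plus_def)
  then show ?thesis using subspace_sums[OF assms] by simp
qed

lemma set_plus_cball_diff_subset:
  fixes U V :: "'a::real_normed_vector set"
  assumes "subspace U" and "subspace V"
  shows "((U \<inter> cball 0 k) + V) + (*\<^sub>R) (-1) ` ((U \<inter> cball 0 k) + V) \<subseteq> (U \<inter> cball 0 (2 * k)) + V"
proof
  fix z assume "z \<in> ((U \<inter> cball 0 k) + V) + (*\<^sub>R) (-1) ` ((U \<inter> cball 0 k) + V)"
  then obtain y1 y2 where z: "z = y1 + (-1) *\<^sub>R y2"
    and "y1 \<in> (U \<inter> cball 0 k) + V" and "y2 \<in> (U \<inter> cball 0 k) + V"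
    by (blast elim: set_plus_elim)
  from \<open>y1 \<in> (U \<inter> cball 0 k) + V\<close>
  obtain u1 v1 where "y1 = u1 + v1" "u1 \<in> U \<inter> cball 0 k" "v1 \<in> V" by (rule set_plus_elim)
  from \<open>y2 \<in> (U \<inter> cball 0 k) + V\<close>
  obtain u2 v2 where "y2 = u2 + v2" "u2 \<in> U \<inter> cball 0 k" "v2 \<in> V" by (rule set_plus_elim)
  have "norm (u1 - u2) \<le> 2 * k"
    using norm_triangle_ineq4[of u1 u2] \<open>u1 \<in> U \<inter> cball 0 k\<close> \<open>u2 \<in> U \<inter> cball 0 k\<close> by simp
  then have "u1 - u2 \<in> U \<inter> cball 0 (2 * k)"
    using assms(1) \<open>u1 \<in> U \<inter> cball 0 k\<close> \<open>u2 \<in> U \<inter> cball 0 k\<close> by (simp add: subspace_diff)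
  moreover have "v1 - v2 \<in> V" using assms(2) \<open>v1 \<in> V\<close> \<open>v2 \<in> V\<close> by (rule subspace_diff)
  moreover have "z = (u1 - u2) + (v1 - v2)"
    using z \<open>y1 = u1 + v1\<close> \<open>y2 = u2 + v2\<close> by (simp add: algebra_simps)
  ultimately show "z \<in> (U \<inter> cball 0 (2 * k)) + V" by (simp add: set_plus_intro)
qed

lemma Baire_ball_subset_closure:
  fixes W :: "'a::complete_space set"
  assumes "closed W" and "W \<noteq> {}" and "W \<subseteq> (\<Union>k::nat. F k)" and "\<And>k. F k \<subseteq> W"
  shows "\<exists>k. \<exists>w\<in>W. \<exists>r>0. \<forall>x\<in>W. dist x w < r \<longrightarrow> x \<in> closure (F k)"
proof -
  have closure_F: "closure (F k) \<subseteq> W" for k by (rule closure_minimal[OF assms(4) assms(1)])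
  have "(\<Union>k. F k) \<subseteq> (\<Union>k. closure (F k))" by (intro UN_mono subset_refl closure_subset)
  with assms(3) closure_F have Un_F: "(\<Union>k. closure (F k)) = W" by (intro equalityI UN_least) auto
  have "\<exists>k. top_of_set W interior_of closure (F k) \<noteq> {}"
  proof (rule ccontr)
    have "completely_metrizable_space (top_of_set W)"
      using assms(1) by (intro completely_metrizable_space_closedin completely_metrizable_space_euclidean)
        (simp add: closed_closedin[symmetric])
    moreover assume "\<not> (\<exists>k. top_of_set W interior_of closure (F k) \<noteq> {})"
    ultimately have "top_of_set W interior_of (\<Union>k. closure (F k)) = {}"
      by (intro Baire_category_alt) (auto intro!: closed_subset closure_F)
    then show False using assms(2) interior_of_topspace[of "top_of_set W"] unfolding Un_F by simp
  qed
  then obtain k w where w: "w \<in> top_of_set W interior_of closure (F k)" by blast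
  define I where "I = top_of_set W interior_of closure (F k)"
  have "w \<in> I" and "I \<subseteq> closure (F k)" using w by (simp_all add: I_def interior_of_subset)
  have "openin (top_of_set W) I" by (simp add: I_def)
  then have "I \<subseteq> W" and "\<forall>x\<in>I. \<exists>e>0. \<forall>x'\<in>W. dist x' x < e \<longrightarrow> x' \<in> I"
    unfolding openin_euclidean_subtopology_iff by simp_all
  then obtain r where "r > 0" and "\<forall>x\<in>W. dist x w < r \<longrightarrow> x \<in> I" and "w \<in> W"
    using \<open>w \<in> I\<close> by blast
  with \<open>I \<subseteq> closure (F k)\<close> show ?thesis by blast
qed

lemma sum_subspaces_ball_subset_closure:
  fixes U V :: "'a::{real_normed_vector,complete_space} set"
  assumes "subspace U" and "subspace V" and "closed (U + V)"
  shows "\<exists>k r. 0 \<le> k \<and> 0 < r \<and> (U + V) \<inter> ball 0 r \<subseteq> closure ((U \<inter> cball 0 k) + V)"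
proof -
  define S where "S k = (U \<inter> cball 0 (real k)) + V" for k
  have "U + V \<subseteq> (\<Union>k. S k)"
  proof
    fix w assume "w \<in> U + V"
    then obtain u v where "w = u + v" "u \<in> U" "v \<in> V" by (rule set_plus_elim)
    moreover obtain k :: nat where "norm u \<le> real k" using real_nat_ceiling_ge by blast
    ultimately have "w \<in> S k" unfolding S_def by auto
    then show "w \<in> (\<Union>k. S k)" by blast
  qed
  moreover have "S k \<subseteq> U + V" for k unfolding S_def by (intro set_plus_mono2) auto
  moreover have "0 \<in> U + V" using assms(1,2) subspace_0 subspace_set_plus by blast
  ultimately obtain k w0 r where "w0 \<in> U + V" and "0 < r"
    and r: "\<forall>w\<in>U + V. dist w w0 < r \<longrightarrow> w \<in> closure (S k)"
    using Baire_ball_subset_closure[OF assms(3)] by blast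
  have S_diff: "S k + (*\<^sub>R) (-1) ` S k \<subseteq> S (2 * k)"
    unfolding S_def using set_plus_cball_diff_subset[OF assms(1,2), of "real k"] by simp
  have "(U + V) \<inter> ball 0 r \<subseteq> closure (S (2 * k))"
  proof
    fix w assume w: "w \<in> (U + V) \<inter> ball 0 r"
    have "w0 + w \<in> U + V"
      using w \<open>w0 \<in> U + V\<close> subspace_add[OF subspace_set_plus[OF assms(1,2)]] by blast
    then have "w0 + w \<in> closure (S k)" using w r by (simp add: dist_norm)
    moreover have "w0 \<in> closure (S k)" using r \<open>w0 \<in> U + V\<close> \<open>0 < r\<close> by simp
    then have "(-1) *\<^sub>R w0 \<in> closure ((*\<^sub>R) (-1) ` S k)" by (metis closure_scaleR image_eqI)
    ultimately have "(w0 + w) + (-1) *\<^sub>R w0 \<in> closure (S k + (*\<^sub>R) (-1) ` S k)"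
      using closure_sum by blast
    then show "w \<in> closure (S (2 * k))" using closure_mono[OF S_diff] by auto
  qed
  then show ?thesis unfolding S_def using \<open>0 < r\<close> by (intro exI[of _ "real (2 * k)"] exI[of _ r]) auto
qed

lemma scaleR_image_set_plus_cball_subset:
  fixes U V :: "'a::real_normed_vector set"
  assumes "subspace U" and "subspace V"
  shows "(*\<^sub>R) c ` ((U \<inter> cball 0 k) + V) \<subseteq> (U \<inter> cball 0 (\<bar>c\<bar> * k)) + V"
proof
  fix z assume "z \<in> (*\<^sub>R) c ` ((U \<inter> cball 0 k) + V)"
  then obtain u v where z: "z = c *\<^sub>R (u + v)" and "u \<in> U" "norm u \<le> k" "v \<in> V"
    by (blast elim!: set_plus_elim dest: mem_cball_0[THEN iffD1])
  have "c *\<^sub>R u \<in> U \<inter> cball 0 (\<bar>c\<bar> * k)"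
    using assms(1) \<open>u \<in> U\<close> \<open>norm u \<le> k\<close> by (simp add: subspace_scale mult_left_mono)
  moreover have "c *\<^sub>R v \<in> V" using assms(2) \<open>v \<in> V\<close> by (rule subspace_scale)
  ultimately show "z \<in> (U \<inter> cball 0 (\<bar>c\<bar> * k)) + V"
    unfolding z scaleR_add_right by (rule set_plus_intro)
qed

lemma sum_subspaces_almost_open:
  fixes U V :: "'a::{real_normed_vector,complete_space} set"
  assumes "subspace U" and "subspace V" and "closed (U + V)"
  shows "\<exists>M\<ge>0. \<forall>w\<in>U + V. w \<in> closure ((U \<inter> cball 0 (M * norm w)) + V)"
proof -
  obtain k r where "0 \<le> k" "0 < r" and kr: "(U + V) \<inter> ball 0 r \<subseteq> closure ((U \<inter> cball 0 k) + V)"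
    using sum_subspaces_ball_subset_closure[OF assms] by blast
  define M where "M = 2 * k / r"
  have "w \<in> closure ((U \<inter> cball 0 (M * norm w)) + V)" if w: "w \<in> U + V" for w
  proof (cases "w = 0")
    case True
    have "0 + 0 \<in> (U \<inter> cball 0 0) + V"
      using assms(1,2) subspace_0 by (intro set_plus_intro) auto
    then show ?thesis using True closure_subset by fastforce
  next
    case False
    define l where "l = r / (2 * norm w)"
    have "l > 0" using False \<open>0 < r\<close> by (simp add: l_def)
    have "l *\<^sub>R w \<in> (U + V) \<inter> ball 0 r"
      using subspace_scale[OF subspace_set_plus[OF assms(1,2)] w] \<open>0 < r\<close> False by (simp add: l_def)
    then have "(1 / l) *\<^sub>R (l *\<^sub>R w) \<in> (*\<^sub>R) (1 / l) ` closure ((U \<inter> cball 0 k) + V)"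
      using kr by blast
    then have "w \<in> closure ((*\<^sub>R) (1 / l) ` ((U \<inter> cball 0 k) + V))"
      using \<open>l > 0\<close> by (simp add: closure_scaleR)
    moreover have "\<bar>1 / l\<bar> * k = M * norm w" using \<open>0 < r\<close> \<open>l > 0\<close> by (simp add: l_def M_def)
    then have "(*\<^sub>R) (1 / l) ` ((U \<inter> cball 0 k) + V) \<subseteq> (U \<inter> cball 0 (M * norm w)) + V"
      using scaleR_image_set_plus_cball_subset[OF assms(1,2), of "1 / l" k] by simp
    ultimately show ?thesis using closure_mono by blast
  qed
  moreover have "M \<ge> 0" using \<open>0 \<le> k\<close> \<open>0 < r\<close> by (simp add: M_def)
  ultimately show ?thesis by blast
qed

lemma almost_open_approx:
  fixes U V :: "'a::real_normed_vector set"
  assumes "subspace U" and "subspace V" and "z \<in> closure ((U \<inter> cball 0 (M * norm z)) + V)"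
  shows "\<exists>u\<in>U. \<exists>v\<in>V. norm u \<le> M * norm z \<and> norm (z - (u + v)) \<le> norm z / 2"
proof (cases "z = 0")
  case True
  then show ?thesis using assms(1,2) subspace_0 by fastforce
next
  case False
  then obtain y where "y \<in> (U \<inter> cball 0 (M * norm z)) + V" and "dist y z < norm z / 2"
    using assms(3) closure_approachable[of z] by (metis half_gt_zero zero_less_norm_iff)
  then show ?thesis by (force elim!: set_plus_elim simp: dist_norm norm_minus_commute)
qed

lemma almost_open_decomposition_series:
  fixes U V :: "'a::real_normed_vector set"
  assumes "subspace U" and "subspace V" and "0 \<le> M"
    and almost_open: "\<And>z. z \<in> U + V \<Longrightarrow> z \<in> closure ((U \<inter> cball 0 (M * norm z)) + V)"
    and "w \<in> U + V"
  obtains a b where "\<And>n. a n \<in> U" and "\<And>n. b n \<in> V" and "\<And>n. norm (a n) \<le> M * norm w / 2^n"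
    and "\<And>n. norm (w - (\<Sum>i<n. a i + b i)) \<le> norm w / 2^n"
proof -
  have "\<exists>u\<in>U. \<exists>v\<in>V. norm u \<le> M * norm z \<and> norm (z - (u + v)) \<le> norm z / 2" if "z \<in> U + V" for z
    using assms(1,2) almost_open[OF that] by (rule almost_open_approx)
  then obtain f g where fg: "\<And>z. z \<in> U + V \<Longrightarrow>
      f z \<in> U \<and> g z \<in> V \<and> norm (f z) \<le> M * norm z \<and> norm (z - (f z + g z)) \<le> norm z / 2"
    by metis
  \<comment> \<open>successive approximation as in the open mapping theorem; \<open>r n\<close> is the residual after \<open>n\<close> steps\<close>
  define r where "r n = ((\<lambda>z. z - (f z + g z)) ^^ n) w" for n
  have r_Suc: "r (Suc n) = r n - (f (r n) + g (r n))" for n by (simp add: r_def)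
  have r: "r n \<in> U + V \<and> norm (r n) \<le> norm w / 2^n" for n
  proof (induction n)
    case 0
    then show ?case using \<open>w \<in> U + V\<close> by (simp add: r_def)
  next
    case (Suc n)
    then have "f (r n) + g (r n) \<in> U + V" using fg by blast
    then have "r (Suc n) \<in> U + V"
      using Suc subspace_diff[OF subspace_set_plus[OF assms(1,2)]] by (simp add: r_Suc)
    moreover have "norm (r (Suc n)) \<le> norm w / 2^Suc n"
      using fg[of "r n"] Suc by (simp add: r_Suc)
    ultimately show ?case ..
  qed
  have telescope: "w - (\<Sum>i<n. f (r i) + g (r i)) = r n" for n
  proof (induction n)
    case 0
    then show ?case by (simp add: r_def)
  next
    case (Suc n)
    then show ?case by (simp add: r_Suc algebra_simps)
  qed
  show ?thesis
  proof (rule that)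
    show "f (r n) \<in> U" and "g (r n) \<in> V" for n using fg r by blast+
    show "norm (f (r n)) \<le> M * norm w / 2^n" for n
      using fg[of "r n"] r[of n] mult_left_mono[OF _ \<open>0 \<le> M\<close>, of "norm (r n)" "norm w / 2^n"]
      by simp
    show "norm (w - (\<Sum>i<n. f (r i) + g (r i))) \<le> norm w / 2^n" for n
      using r[of n] telescope[of n] by simp
  qed
qed

lemma closed_subspace_geometric_series:
  fixes a :: "nat \<Rightarrow> 'a::{real_normed_vector,complete_space}"
  assumes "subspace U" and "closed U" and "\<And>n. a n \<in> U" and "\<And>n. norm (a n) \<le> C / 2^n"
  obtains u where "(\<lambda>n. \<Sum>i<n. a i) \<longlonglongrightarrow> u" and "u \<in> U" and "norm u \<le> 2 * C"
proof -
  define c where "c n = C * (1/2)^n" for n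
  have "0 \<le> C" using order_trans[OF norm_ge_zero assms(4)[of 0]] by simp
  have c_sums: "c sums (2 * C)"
    using sums_mult[OF geometric_sums[of "1/2::real"], of C] unfolding c_def by (simp add: ac_simps)
  have a_c: "dist (\<Sum>i<n. a i) (\<Sum>i<Suc n. a i) \<le> c n" for n
    using assms(4)[of n] by (simp add: c_def dist_norm power_one_over)
  have "Cauchy (\<lambda>n. \<Sum>i<n. a i)"
    using a_c sums_summable[OF c_sums] by (rule Cauchy_if_summable_dist_Suc)
  then obtain u where u: "(\<lambda>n. \<Sum>i<n. a i) \<longlonglongrightarrow> u"
    unfolding Cauchy_convergent_iff convergent_def ..
  have "(\<Sum>i<n. a i) \<in> U" for n by (simp add: subspace_sum[OF assms(1)] assms(3))
  then have "u \<in> U" using closed_sequentially[OF assms(2) _ u] by blast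
  moreover have "norm u \<le> 2 * C"
  proof (rule LIMSEQ_le_const2[OF tendsto_norm[OF u]], intro exI allI impI)
    fix n
    have "norm (\<Sum>i<n. a i) \<le> (\<Sum>i<n. c i)"
      using dist_le_sum_if_dist_Suc_le[of "\<lambda>n. \<Sum>i<n. a i" c 0 n, OF a_c]
      by (simp add: lessThan_atLeast0)
    also have "\<dots> \<le> 2 * C"
      using sum_le_suminf[OF sums_summable[OF c_sums]] sums_unique[OF c_sums] \<open>0 \<le> C\<close>
      by (simp add: c_def)
    finally show "norm (\<Sum>i<n. a i) \<le> 2 * C" .
  qed
  ultimately show ?thesis using u that by blast
qed

lemma sum_closed_subspaces_bounded_decomposition:
  fixes U V :: "'a::{real_normed_vector,complete_space} set"
  assumes "subspace U" and "closed U" and "subspace V" and "closed V" and "closed (U + V)"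
  shows "\<exists>M. \<forall>w\<in>U + V. \<exists>u\<in>U. w - u \<in> V \<and> norm u \<le> M * norm w"
proof -
  obtain M where "0 \<le> M" and almost_open: "\<forall>w\<in>U + V. w \<in> closure ((U \<inter> cball 0 (M * norm w)) + V)"
    using sum_subspaces_almost_open[OF assms(1,3,5)] by blast
  have "\<exists>u\<in>U. w - u \<in> V \<and> norm u \<le> 2 * M * norm w" if w: "w \<in> U + V" for w
  proof (rule almost_open_decomposition_series[OF assms(1,3) \<open>0 \<le> M\<close> almost_open[rule_format] w])
    fix a b assume a: "\<And>n. a n \<in> U" and b: "\<And>n. b n \<in> V"
      and a_le: "\<And>n. norm (a n) \<le> M * norm w / 2^n"
      and residual: "\<And>n. norm (w - (\<Sum>i<n. a i + b i)) \<le> norm w / 2^n"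
    obtain u where u: "(\<lambda>n. \<Sum>i<n. a i) \<longlonglongrightarrow> u" and "u \<in> U" and "norm u \<le> 2 * (M * norm w)"
      using closed_subspace_geometric_series[OF assms(1,2) a a_le] by blast
    have "(\<lambda>n. w - (\<Sum>i<n. a i + b i)) \<longlonglongrightarrow> 0"
      using residual
      by (intro Lim_null_comparison[OF always_eventually LIMSEQ_divide_realpow_zero[of 2 "norm w"]]) auto
    then have "(\<lambda>n. (w - (\<Sum>i<n. a i)) - (w - (\<Sum>i<n. a i + b i))) \<longlonglongrightarrow> (w - u) - 0"
      using u by (intro tendsto_intros)
    then have b_lim: "(\<lambda>n. \<Sum>i<n. b i) \<longlonglongrightarrow> w - u" by (simp add: sum.distrib)
    have "(\<Sum>i<n. b i) \<in> V" for n by (simp add: subspace_sum[OF assms(3)] b)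
    then have "w - u \<in> V" using closed_sequentially[OF assms(4) _ b_lim] by blast
    then show "\<exists>u\<in>U. w - u \<in> V \<and> norm u \<le> 2 * M * norm w"
      using \<open>u \<in> U\<close> \<open>norm u \<le> 2 * (M * norm w)\<close> by auto
  qed
  then show ?thesis by blast
qed

lemma sum_subspaces_norm_le:
  fixes U V :: "'a::{real_normed_vector,complete_space} set"
  assumes "subspace U" and "closed U" and "subspace V" and "closed V"
    and "U \<inter> V = {0}" and "closed (U + V)"
  shows "\<exists>K. \<forall>u\<in>U. \<forall>v\<in>V. norm u \<le> K * norm (u + v)"
proof -
  obtain M where M: "\<forall>w\<in>U + V. \<exists>u\<in>U. w - u \<in> V \<and> norm u \<le> M * norm w"
    using sum_closed_subspaces_bounded_decomposition[OF assms(1-4,6)] by blast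
  have "norm u0 \<le> M * norm (u0 + v0)" if "u0 \<in> U" "v0 \<in> V" for u0 v0
  proof -
    have "u0 + v0 \<in> U + V" using that by (rule set_plus_intro)
    then obtain u where "u \<in> U" "u0 + v0 - u \<in> V" "norm u \<le> M * norm (u0 + v0)"
      using M by blast
    have "u0 - u \<in> U" using assms(1) \<open>u0 \<in> U\<close> \<open>u \<in> U\<close> by (rule subspace_diff)
    moreover have "(u0 + v0 - u) - v0 \<in> V"
      using assms(3) \<open>u0 + v0 - u \<in> V\<close> \<open>v0 \<in> V\<close> by (rule subspace_diff)
    ultimately have "u0 - u \<in> U \<inter> V" by (simp add: algebra_simps)
    then show ?thesis using assms(5) \<open>norm u \<le> M * norm (u0 + v0)\<close> by simp
  qed
  then show ?thesis by blast
qed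

section \<open>The contraction \<open>P\<^sub>U \<circ> P\<^sub>V\<close>\<close>

lemma norm_metric_proj_subspace_sq_le:
  fixes U V :: "'a::{real_inner,complete_space} set"
  assumes "subspace U" and "closed U" and "subspace V"
    and K: "\<And>u v. u \<in> U \<Longrightarrow> v \<in> V \<Longrightarrow> norm u \<le> K * norm (u + v)" and "1 \<le> K" and "y \<in> V"
  shows "K^2 * norm (metric_proj U y)^2 \<le> (K^2 - 1) * norm y^2"
proof -
  define u where "u = metric_proj U y"
  have "u \<in> U" unfolding u_def
    using assms(1,2) by (rule metric_proj_subspace_in)
  have "inner (y - u) u = 0"
    unfolding u_def using metric_proj_subspace_orthogonal[OF assms(1,2)] \<open>u \<in> U\<close> u_def by blast
  then have uy: "inner u y = norm u^2"
    by (simp add: inner_diff_left power2_norm_eq_inner inner_commute[of u y])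
  show ?thesis
  proof (cases "u = 0")
    case True
    then show ?thesis using \<open>1 \<le> K\<close> by (simp add: u_def)
  next
    case False
    then have "y \<noteq> 0" using uy by auto
    \<comment> \<open>\<open>t\<close> minimises \<open>norm (u - t *\<^sub>R y)\<close> because \<open>inner u y = norm u^2\<close>\<close>
    define t where "t = norm u^2 / norm y^2"
    have "(- t) *\<^sub>R y \<in> V" using assms(3,6) by (rule subspace_scale)
    then have "norm u \<le> K * norm (u - t *\<^sub>R y)" using K[OF \<open>u \<in> U\<close>] by fastforce
    then have "norm u^2 \<le> K^2 * norm (u - t *\<^sub>R y)^2"
      by (metis norm_ge_zero power_mono power_mult_distrib)
    also have "norm (u - t *\<^sub>R y)^2 = norm u^2 - norm u^2 * t"
      using \<open>y \<noteq> 0\<close> unfolding power2_norm_eq_inner t_def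
      by (simp add: inner_diff_left inner_diff_right inner_commute uy power2_norm_eq_inner field_simps)
    finally have "norm u^2 * norm y^2 \<le> K^2 * (norm u^2 * (norm y^2 - norm u^2))"
      using \<open>y \<noteq> 0\<close> by (simp add: t_def field_simps)
    then have "norm y^2 \<le> K^2 * (norm y^2 - norm u^2)"
      using False by (simp add: mult.left_commute[of "K^2"])
    then show ?thesis by (simp add: u_def algebra_simps)
  qed
qed

lemma metric_proj_comp_contraction:
  fixes U V :: "'a::{real_inner,complete_space} set"
  assumes "subspace U" and "closed U" and "subspace V" and "closed V"
    and K: "\<And>u v. u \<in> U \<Longrightarrow> v \<in> V \<Longrightarrow> norm u \<le> K * norm (u + v)"
  shows "\<exists>c<1. 0 \<le> c \<and> (\<forall>x. norm (metric_proj U (metric_proj V x)) \<le> c * norm x)"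
proof -
  define K' where "K' = max K 1"
  have "1 \<le> K'" by (simp add: K'_def)
  have K': "norm u \<le> K' * norm (u + v)" if "u \<in> U" "v \<in> V" for u v
    using K[OF that] unfolding K'_def by (meson max.cobounded1 mult_right_mono norm_ge_zero order_trans)
  define s where "s = 1 - 1 / K'^2"
  have "0 \<le> s" and "s < 1" using \<open>1 \<le> K'\<close> by (simp_all add: s_def field_simps)
  have "norm (metric_proj U (metric_proj V x)) \<le> sqrt s * norm x" for x
  proof -
    define y where "y = metric_proj V x"
    have "y \<in> V" and "norm y \<le> norm x" unfolding y_def
      using assms(3,4) by (simp_all add: metric_proj_subspace_in norm_metric_proj_le subspace_imp_convex subspace_0)
    have "K'^2 * norm (metric_proj U y)^2 \<le> (K'^2 - 1) * norm y^2"
      using norm_metric_proj_subspace_sq_le[OF assms(1-3) K' \<open>1 \<le> K'\<close> \<open>y \<in> V\<close>] .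
    moreover have "a \<le> s * b" if "K'^2 * a \<le> (K'^2 - 1) * b" for a b
      using \<open>1 \<le> K'\<close> that by (simp add: s_def field_simps)
    ultimately have "norm (metric_proj U y)^2 \<le> s * norm y^2" by blast
    also have "\<dots> = (sqrt s * norm y)^2" using \<open>0 \<le> s\<close> by (simp add: power_mult_distrib)
    finally have "norm (metric_proj U y)^2 \<le> (sqrt s * norm y)^2" .
    then have "norm (metric_proj U y) \<le> sqrt s * norm y"
      by (rule power2_le_imp_le) (simp add: \<open>0 \<le> s\<close>)
    also have "\<dots> \<le> sqrt s * norm x"
      by (rule mult_left_mono[OF \<open>norm y \<le> norm x\<close>]) (simp add: \<open>0 \<le> s\<close>)
    finally show ?thesis unfolding y_def .
  qed
  moreover have "sqrt s < 1" and "0 \<le> sqrt s" using \<open>0 \<le> s\<close> \<open>s < 1\<close> by simp_all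
  ultimately show ?thesis by blast
qed

section \<open>Attouch--Wets convergence and perturbed projections\<close>

lemma aw_excess_less_imp_near:
  fixes C D :: "'a::real_normed_vector set"
  assumes "aw_excess N C D < e" and "c \<in> C" and "norm c \<le> real N" and "D \<noteq> {}"
  obtains d where "d \<in> D" and "dist c d < e"
proof -
  obtain d0 where "d0 \<in> D" using assms(4) by blast
  have "bdd_above ((\<lambda>c. infdist c D) ` (C \<inter> cball 0 (real N)))"
  proof (rule bdd_aboveI)
    fix y assume "y \<in> (\<lambda>c. infdist c D) ` (C \<inter> cball 0 (real N))"
    then obtain c' where "norm c' \<le> real N" and "y = infdist c' D" by auto
    then have "y \<le> norm c' + norm d0"
      using infdist_le[OF \<open>d0 \<in> D\<close>, of c'] norm_triangle_ineq4[of c' d0] by (simp add: dist_norm)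
    then show "y \<le> real N + norm d0" using \<open>norm c' \<le> real N\<close> by linarith
  qed
  then have "infdist c D \<le> aw_excess N C D"
    using assms(2,3) unfolding aw_excess_def by (auto intro: cSUP_upper)
  then have "infdist c D < e" using assms(1) by linarith
  then show ?thesis using assms(4) that by (rule infdist_lessE)
qed

lemma aw_converges_eventually_near:
  fixes A :: "nat \<Rightarrow> 'a::real_normed_vector set"
  assumes "aw_converges A D" and "\<And>n. A n \<noteq> {}" and "D \<noteq> {}" and "0 < e"
  shows "\<forall>\<^sub>F n in sequentially.
    (\<forall>c\<in>A n. norm c \<le> real N \<longrightarrow> (\<exists>d\<in>D. dist c d < e)) \<and>
    (\<forall>d\<in>D. norm d \<le> real N \<longrightarrow> (\<exists>c\<in>A n. dist d c < e))"
proof -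
  have "(\<lambda>n. aw_dist N (A n) D) \<longlonglongrightarrow> 0" using assms(1) unfolding aw_converges_def ..
  then have "\<forall>\<^sub>F n in sequentially. aw_dist N (A n) D < e" using assms(4) by (rule order_tendstoD(2))
  then show ?thesis
  proof eventually_elim
    case (elim n)
    then have "aw_excess N (A n) D < e" and "aw_excess N D (A n) < e" by (simp_all add: aw_dist_def)
    have "\<exists>d\<in>D. dist c d < e" if "c \<in> A n" "norm c \<le> real N" for c
      using \<open>aw_excess N (A n) D < e\<close> that assms(3) by (rule aw_excess_less_imp_near) blast
    moreover have "\<exists>c\<in>A n. dist d c < e" if "d \<in> D" "norm d \<le> real N" for d
      using \<open>aw_excess N D (A n) < e\<close> that assms(2) by (rule aw_excess_less_imp_near) blast
    ultimately show ?case by blast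
  qed
qed

lemma dist_metric_proj_le_if_near:
  fixes A D :: "'a::{real_inner,complete_space} set"
  assumes A: "closed A" "convex A" and D: "closed D" "convex D" and "d0 \<in> D"
    and near_A: "\<And>c. c \<in> A \<Longrightarrow> norm c \<le> N \<Longrightarrow> \<exists>d\<in>D. dist c d < e"
    and near_D: "\<And>d. d \<in> D \<Longrightarrow> norm d \<le> N \<Longrightarrow> \<exists>c\<in>A. dist d c < e"
    and "e \<le> 1" and "norm x + norm d0 \<le> \<rho>" and "2 * \<rho> + 1 \<le> N"
  shows "dist (metric_proj A x) (metric_proj D x) \<le> e + 2 * sqrt (e * (\<rho> + 1))"
proof -
  have norm_le: "norm z \<le> norm x + dist x z" for z
    using norm_triangle_ineq[of x "z - x"] by (simp add: dist_norm norm_minus_commute)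
  have "norm x \<le> \<rho>" using assms(9) norm_ge_zero[of d0] by linarith
  define p q where "p = metric_proj A x" and "q = metric_proj D x"
  have "q \<in> D" unfolding q_def using D \<open>d0 \<in> D\<close> by (auto intro: metric_proj_in_set)
  have "dist x q \<le> dist x d0" unfolding q_def using D \<open>d0 \<in> D\<close> by (rule metric_proj_le)
  also have "\<dots> \<le> norm x + norm d0" by (simp add: dist_norm norm_triangle_ineq4)
  finally have "dist x q \<le> \<rho>" using assms(9) by linarith
  then have "norm q \<le> N" using norm_le[of q] \<open>norm x \<le> \<rho>\<close> assms(10) by linarith
  then obtain q' where "q' \<in> A" and "dist q q' < e" using near_D \<open>q \<in> D\<close> by blast
  then have "0 < e" using zero_le_dist[of q q'] by linarith
  have "p \<in> A" unfolding p_def using A \<open>q' \<in> A\<close> by (auto intro: metric_proj_in_set)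
  have "dist x p \<le> dist x q'" unfolding p_def using A \<open>q' \<in> A\<close> by (rule metric_proj_le)
  then have "dist x p \<le> \<rho> + e"
    using dist_triangle[of x q' q] \<open>dist x q \<le> \<rho>\<close> \<open>dist q q' < e\<close> by (simp add: dist_commute)
  then have "norm p \<le> N" using norm_le[of p] \<open>norm x \<le> \<rho>\<close> \<open>e \<le> 1\<close> assms(10) by linarith
  then obtain p' where "p' \<in> D" and "dist p p' < e" using near_A \<open>p \<in> A\<close> by blast
  have "dist p q \<le> e + 2 * sqrt (e * (dist x q + e))"
    using dist_metric_proj_le[OF A D \<open>q' \<in> A\<close> _ \<open>p' \<in> D\<close>, of x e]
      \<open>dist q q' < e\<close> \<open>dist p p' < e\<close> unfolding p_def q_def by simp
  also have "\<dots> \<le> e + 2 * sqrt (e * (\<rho> + 1))"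
    using \<open>dist x q \<le> \<rho>\<close> \<open>e \<le> 1\<close> \<open>0 < e\<close> by (simp add: mult_left_mono)
  finally show ?thesis by (simp add: p_def q_def)
qed

lemma aw_converges_metric_proj_uniform:
  fixes A :: "nat \<Rightarrow> 'a::{real_inner,complete_space} set"
  assumes A: "\<And>n. closed (A n)" "\<And>n. convex (A n)" "\<And>n. A n \<noteq> {}"
    and D: "closed D" "convex D" "D \<noteq> {}"
    and "aw_converges A D" and "0 < d"
  shows "\<forall>\<^sub>F n in sequentially. \<forall>x. norm x \<le> R \<longrightarrow> dist (metric_proj (A n) x) (metric_proj D x) \<le> d"
proof -
  obtain d0 where "d0 \<in> D" using D(3) by blast
  define \<rho> where "\<rho> = max R 0 + norm d0"
  obtain e where "0 < e" "e \<le> 1" and e: "e + 2 * sqrt (e * (\<rho> + 1)) \<le> d"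
    using small_eps_sqrt_bound[OF \<open>0 < d\<close>, of "\<rho> + 1"] by (auto simp: \<rho>_def)
  obtain N :: nat where N: "2 * \<rho> + 1 \<le> real N" using real_nat_ceiling_ge by blast
  from aw_converges_eventually_near[OF assms(7) A(3) D(3) \<open>0 < e\<close>, of N]
  show ?thesis
  proof eventually_elim
    case (elim n)
    have "dist (metric_proj (A n) x) (metric_proj D x) \<le> d" if "norm x \<le> R" for x
    proof -
      have "norm x + norm d0 \<le> \<rho>" using that by (simp add: \<rho>_def)
      then have "dist (metric_proj (A n) x) (metric_proj D x) \<le> e + 2 * sqrt (e * (\<rho> + 1))"
        using elim by (intro dist_metric_proj_le_if_near[OF A(1,2) D(1,2) \<open>d0 \<in> D\<close> _ _ \<open>e \<le> 1\<close> _ N]) auto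
      then show ?thesis using e by linarith
    qed
    then show ?case by blast
  qed
qed

lemma aw_converges_metric_proj_tendsto:
  fixes A :: "nat \<Rightarrow> 'a::{real_inner,complete_space} set"
  assumes "\<And>n. closed (A n)" "\<And>n. convex (A n)" "\<And>n. A n \<noteq> {}"
    and "closed D" "convex D" "D \<noteq> {}" and "aw_converges A D"
  shows "(\<lambda>n. metric_proj (A n) x) \<longlonglongrightarrow> metric_proj D x"
proof (rule tendsto_iff[THEN iffD2], intro allI impI)
  fix e :: real assume "0 < e"
  from aw_converges_metric_proj_uniform[OF assms half_gt_zero[OF this], where R = "norm x"]
  have "\<forall>\<^sub>F n in sequentially. dist (metric_proj (A n) x) (metric_proj D x) \<le> e / 2"
    by eventually_elim simp
  then show "\<forall>\<^sub>F n in sequentially. dist (metric_proj (A n) x) (metric_proj D x) < e"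
    by (rule eventually_mono) (use \<open>0 < e\<close> in simp)
qed

lemma aw_converges_metric_proj_comp_le:
  fixes U V :: "'a::{real_inner,complete_space} set"
  assumes A: "\<And>n. closed (A n)" "\<And>n. convex (A n)" "\<And>n. A n \<noteq> {}"
    and B: "\<And>n. closed (B n)" "\<And>n. convex (B n)" "\<And>n. B n \<noteq> {}"
    and "subspace U" and "closed U" and "subspace V" and "closed V"
    and "aw_converges A U" and "aw_converges B V"
    and contraction: "\<And>x. norm (metric_proj U (metric_proj V x)) \<le> c * norm x" and "0 < d"
  shows "\<forall>\<^sub>F n in sequentially. \<forall>x. norm x \<le> R \<longrightarrow>
    norm (metric_proj (A n) (metric_proj (B n) x)) \<le> c * norm x + d"
proof -
  have U: "convex U" "U \<noteq> {}" and V: "convex V" "V \<noteq> {}"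
    using assms(7,9) by (auto simp: subspace_imp_convex dest: subspace_0)
  have "\<forall>\<^sub>F n in sequentially. \<forall>x. norm x \<le> R \<longrightarrow> dist (metric_proj (B n) x) (metric_proj V x) \<le> d / 2"
    using assms(12) \<open>0 < d\<close> by (intro aw_converges_metric_proj_uniform B assms(10) V) auto
  moreover have "\<forall>\<^sub>F n in sequentially. \<forall>y. norm y \<le> R \<longrightarrow> dist (metric_proj (A n) y) (metric_proj U y) \<le> d / 2"
    using assms(11) \<open>0 < d\<close> by (intro aw_converges_metric_proj_uniform A assms(8) U) auto
  ultimately show ?thesis
  proof eventually_elim
    case (elim n)
    show ?case
    proof (intro allI impI)
      fix x :: 'a assume "norm x \<le> R"
      define y where "y = metric_proj V x"
      have "norm y \<le> R"
        using norm_metric_proj_le[OF assms(10) V(1) subspace_0[OF assms(9)], of x] \<open>norm x \<le> R\<close>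
        unfolding y_def by linarith
      have "dist (metric_proj (A n) (metric_proj (B n) x)) (metric_proj (A n) y)
          \<le> dist (metric_proj (B n) x) y"
        using A by (intro metric_proj_lipschitz)
      also have "\<dots> \<le> d / 2" using elim \<open>norm x \<le> R\<close> unfolding y_def by blast
      finally have "dist (metric_proj (A n) (metric_proj (B n) x)) (metric_proj (A n) y) \<le> d / 2" .
      moreover have "dist (metric_proj (A n) y) (metric_proj U y) \<le> d / 2"
        using elim \<open>norm y \<le> R\<close> by blast
      ultimately have "dist (metric_proj (A n) (metric_proj (B n) x)) (metric_proj U y) \<le> d"
        using dist_triangle[of "metric_proj (A n) (metric_proj (B n) x)" "metric_proj U y" "metric_proj (A n) y"]
        by linarith
      then show "norm (metric_proj (A n) (metric_proj (B n) x)) \<le> c * norm x + d"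
        using contraction[of x] norm_triangle_ineq2[of "metric_proj (A n) (metric_proj (B n) x)" "metric_proj U y"]
        unfolding y_def by (simp add: dist_norm)
    qed
  qed
qed

lemma pap_tendsto_zero:
  fixes U V :: "'a::{real_inner,complete_space} set"
  assumes A: "\<And>n. closed (A n)" "\<And>n. convex (A n)" "\<And>n. A n \<noteq> {}"
    and B: "\<And>n. closed (B n)" "\<And>n. convex (B n)" "\<And>n. B n \<noteq> {}"
    and "subspace U" and "closed U" and "subspace V" and "closed V"
    and "aw_converges A U" and "aw_converges B V"
    and "0 \<le> c" and "c < 1" and contraction: "\<And>x. norm (metric_proj U (metric_proj V x)) \<le> c * norm x"
  shows "pap_a A B a0 \<longlonglongrightarrow> 0" and "pap_b A B a0 \<longlonglongrightarrow> 0"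
proof -
  show a: "pap_a A B a0 \<longlonglongrightarrow> 0"
  proof (rule nonexpansive_iteration_tendsto_zero[OF _ _ \<open>0 \<le> c\<close> \<open>c < 1\<close>])
    show "pap_a A B a0 (Suc n) = metric_proj (A (Suc n)) (metric_proj (B (Suc n)) (pap_a A B a0 n))" for n
      by simp
    show "dist (metric_proj (A (Suc n)) (metric_proj (B (Suc n)) x))
        (metric_proj (A (Suc n)) (metric_proj (B (Suc n)) y)) \<le> dist x y" for n x y
      by (rule order_trans[OF metric_proj_lipschitz[OF A(1,2,3)] metric_proj_lipschitz[OF B(1,2,3)]])
    show "\<forall>\<^sub>F n in sequentially. \<forall>x. norm x \<le> R \<longrightarrow>
        norm (metric_proj (A (Suc n)) (metric_proj (B (Suc n)) x)) \<le> c * norm x + d" if "0 < d" for R d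
      using aw_converges_metric_proj_comp_le[OF A B assms(7-12) contraction that]
      by (rule eventually_sequentially_Suc[THEN iffD2])
  qed
  have "metric_proj V 0 = 0"
    by (rule metric_proj_self[OF assms(10) subspace_imp_convex[OF assms(9)] subspace_0[OF assms(9)]])
  moreover have "(\<lambda>n. metric_proj (B n) 0) \<longlonglongrightarrow> metric_proj V 0"
    using B assms(10,12) subspace_0[OF assms(9)]
    by (intro aw_converges_metric_proj_tendsto) (auto simp: subspace_imp_convex assms(9))
  ultimately have "(\<lambda>n. metric_proj (B n) 0) \<longlonglongrightarrow> 0" by simp
  then have lim: "(\<lambda>n. norm (pap_a A B a0 n) + norm (metric_proj (B (Suc n)) 0)) \<longlonglongrightarrow> 0"
    using tendsto_add[OF tendsto_norm_zero[OF a] tendsto_norm_zero[OF LIMSEQ_Suc]] by simp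
  have "\<forall>n. norm (pap_b A B a0 n) \<le> norm (pap_a A B a0 n) + norm (metric_proj (B (Suc n)) 0)"
  proof
    fix n
    show "norm (pap_b A B a0 n) \<le> norm (pap_a A B a0 n) + norm (metric_proj (B (Suc n)) 0)"
      using metric_proj_lipschitz[OF B(1,2,3)[of "Suc n"], of "pap_a A B a0 n" 0]
      norm_triangle_ineq2[of "pap_b A B a0 n" "metric_proj (B (Suc n)) 0"]
      by (simp add: pap_b_def dist_norm)
  qed
  from Lim_null_comparison[OF always_eventually[OF this] lim] show "pap_b A B a0 \<longlonglongrightarrow> 0" .
qed

theorem corollary4p19:
  fixes U V :: "'a::{real_inner,complete_space} set"
  assumes "subspace U" and "closed U"
    and "subspace V" and "closed V"
    and "U \<inter> V = {0}"
    and "closed {u + v | u v. u \<in> U \<and> v \<in> V}"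
  shows "stable_couple U V"
  unfolding stable_couple_def
proof (intro allI impI)
  fix A B :: "nat \<Rightarrow> 'a set" and a0 :: 'a
  assume A: "\<forall>n. closed (A n) \<and> convex (A n) \<and> A n \<noteq> {}"
    and B: "\<forall>n. closed (B n) \<and> convex (B n) \<and> B n \<noteq> {}"
    and "aw_converges A U" and "aw_converges B V"
  have "U + V = {u + v | u v. u \<in> U \<and> v \<in> V}" by (auto simp: set_plus_def)
  with assms(6) have "closed (U + V)" by simp
  then obtain K where "\<And>u v. u \<in> U \<Longrightarrow> v \<in> V \<Longrightarrow> norm u \<le> K * norm (u + v)"
    using sum_subspaces_norm_le[OF assms(1-5)] by blast
  then obtain c where c: "c < 1" "0 \<le> c" "\<And>x. norm (metric_proj U (metric_proj V x)) \<le> c * norm x"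
    using metric_proj_comp_contraction[OF assms(1-4)] by blast
  have "pap_a A B a0 \<longlonglongrightarrow> 0" and "pap_b A B a0 \<longlonglongrightarrow> 0"
    using A B by (intro pap_tendsto_zero[OF _ _ _ _ _ _ assms(1-4) \<open>aw_converges A U\<close>
          \<open>aw_converges B V\<close> c(2,1,3)]; blast)+
  then show "convergent (pap_a A B a0) \<and> convergent (pap_b A B a0)"
    unfolding convergent_def by blast
qed

end
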